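(* There exists a constant $c>0$ such that for all integers $1\le m\le n$ and all integers $z\in[0,l(m,n)]$, \[\mathbb{P}_z\big(L(m,n)\cap U(m,n,z)\big)\ge c\,\frac{z}{\sqrt{n-m+1}}.\]
   Context: $X_1,X_2,\ldots$ are i.i.d. uniform on $\{-1,1\}$; under $\mathbb{P}_z$ the walk is $Z_i=z+\sum_{k=1}^i\prod_{j=1}^kX_j$ (a simple symmetric random walk started at $z$). Define $L(m,n)=\{Z_i>0\ \forall\, 1\le i\le n-m+1\}$, $U(m,n,z)=\{\max_{1\le i\le n-m+1}Z_i\ge 2z\}$, and $l(m,n)=\lfloor\sqrt{n-m+1}/2\rfloor\wedge\lfloor\sqrt{m-1}/2\rfloor$. *)

theory Defs
  imports "HOL-Probability.Probability"
begin

text \<open>Sign sequences (X_1,...,X_N) in {-1,1}^N, stored as a list; X_j = xs ! (j-1).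
  Under the uniform distribution on this set the X_j are i.i.d. uniform on {-1,1}.\<close>
definition sign_seqs :: "nat \<Rightarrow> int list set" where
  "sign_seqs N = {xs. length xs = N \<and> set xs \<subseteq> {-1, 1}}"

definition walk :: "int \<Rightarrow> int list \<Rightarrow> nat \<Rightarrow> int" where
  "walk z xs i = z + (\<Sum>k=1..i. \<Prod>j=1..k. xs ! (j - 1))"

definition Pz :: "nat \<Rightarrow> int list set \<Rightarrow> real" where
  "Pz N E = measure_pmf.prob (pmf_of_set (sign_seqs N)) E"

definition Lev :: "nat \<Rightarrow> nat \<Rightarrow> int \<Rightarrow> int list set" where
  "Lev m n z = {xs. \<forall>i\<in>{1..n - m + 1}. walk z xs i > 0}"

definition Uev :: "nat \<Rightarrow> nat \<Rightarrow> int \<Rightarrow> int list set" where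
  "Uev m n z = {xs. (MAX i\<in>{1..n - m + 1}. walk z xs i) \<ge> 2 * z}"

definition lfun :: "nat \<Rightarrow> nat \<Rightarrow> int" where
  "lfun m n = min \<lfloor>sqrt (real (n - m + 1)) / 2\<rfloor> \<lfloor>sqrt (real (m - 1)) / 2\<rfloor>"

end

theory Submission
  imports Defs
begin

text \<open>Let \<open>N = n - m + 1\<close>. Negating \<open>X\<^sub>1\<close> negates the whole path \<open>Z\<^sub>i - z\<close>, so the paths
  are counted like those of a simple random walk. By the reflection principle, the paths from \<open>z\<close>
  that stay positive and end at or above \<open>2z\<close> (so that their maximum reaches \<open>2z\<close>) are as many
  as the paths from \<open>0\<close> that end in \<open>[z, 3z)\<close>. Since \<open>z \<le> \<surd>N / 2\<close>, this window contains
  \<open>z\<close> endpoints \<open>2j - N\<close> with \<open>(j - \<lfloor>N/2\<rfloor> + 1)\<^sup>2 \<le> N\<close>, each reached by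
  \<open>N choose j \<ge> e\<^sup>-\<^sup>4 2\<^sup>N / (2\<surd>N)\<close> paths: the central coefficient is at least
  \<open>2\<^sup>N / (2\<surd>N)\<close>, and the ratios of consecutive coefficients cost at most a factor \<open>e\<^sup>-\<^sup>4\<close>
  over that distance. Hence \<open>c = e\<^sup>-\<^sup>4 / 2\<close>.\<close>

lemma walk_0_eq_sum_prod: "walk 0 xs i = (\<Sum>k=1..i. \<Prod>j<k. xs ! j)"
proof -
  have "(\<Prod>j=1..k. xs ! (j - 1)) = (\<Prod>j<k. xs ! j)" for k
    by (induction k) (auto simp: prod.cl_ivl_Suc)
  then show ?thesis
    by (simp add: walk_def)
qed

lemma walk_eq_start_plus_walk_0: "walk z xs i = z + walk 0 xs i"
  by (simp add: walk_def)

lemma walk_0_at_0 [simp]: "walk 0 xs 0 = 0"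
  by (simp add: walk_def)

lemma walk_0_Cons_Suc: "walk 0 (x # ys) (Suc i) = x * (1 + walk 0 ys i)"
proof (induction i)
  case 0
  then show ?case
    by (simp add: walk_0_eq_sum_prod)
next
  case (Suc i)
  have "(\<Prod>j<Suc (Suc i). (x # ys) ! j) = x * (\<Prod>j<Suc i. ys ! j)"
    by (subst prod.lessThan_Suc_shift) simp
  with Suc show ?case
    by (simp add: walk_0_eq_sum_prod algebra_simps)
qed

lemma finite_sign_seqs [simp]: "finite (sign_seqs N)"
  and card_sign_seqs: "card (sign_seqs N) = 2 ^ N"
proof -
  have "sign_seqs N = {xs. set xs \<subseteq> {-1, 1} \<and> length xs = N}"
    by (auto simp: sign_seqs_def)
  then show "finite (sign_seqs N)" "card (sign_seqs N) = 2 ^ N"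
    by (simp_all add: finite_lists_length_eq card_lists_length_eq numeral_2_eq_2)
qed

lemma sign_seqs_0: "sign_seqs 0 = {[]}"
  by (auto simp: sign_seqs_def)

lemma sign_seqs_Suc: "sign_seqs (Suc N) = Cons 1 ` sign_seqs N \<union> Cons (-1) ` sign_seqs N"
  by (auto simp: sign_seqs_def length_Suc_conv)

lemma Pz_eq_card: "Pz N E = card (sign_seqs N \<inter> E) / 2 ^ N"
proof -
  have "sign_seqs N \<noteq> {}"
    using card_sign_seqs[of N] by auto
  then show ?thesis
    by (simp add: Pz_def measure_pmf_of_set card_sign_seqs)
qed

text \<open>Paths are cut off after time \<open>N\<close>: beyond the length of \<open>xs\<close>, \<open>xs ! j\<close> is unspecified,
  and only the cut-off paths are determined by the sign sequence.\<close>

definition walk_path :: "nat \<Rightarrow> int list \<Rightarrow> nat \<Rightarrow> int" where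
  "walk_path N xs i = (if i \<le> N then walk 0 xs i else 0)"

definition count_paths :: "nat \<Rightarrow> ((nat \<Rightarrow> int) \<Rightarrow> bool) \<Rightarrow> nat" where
  "count_paths N Q = card {xs \<in> sign_seqs N. Q (walk_path N xs)}"

definition prepend_step :: "nat \<Rightarrow> int \<Rightarrow> (nat \<Rightarrow> int) \<Rightarrow> nat \<Rightarrow> int" where
  "prepend_step N x w i = (if i = 0 \<or> Suc N < i then 0 else x + w (i - 1))"

fun negate_head :: "int list \<Rightarrow> int list" where
  "negate_head [] = []"
| "negate_head (y # ys) = (- y) # ys"

lemma prepend_step_0 [simp]: "prepend_step N x w 0 = 0"
  and prepend_step_Suc [simp]: "i \<le> N \<Longrightarrow> prepend_step N x w (Suc i) = x + w i"
  by (simp_all add: prepend_step_def)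

lemma walk_path_0 [simp]: "walk_path N xs 0 = 0"
  by (simp add: walk_path_def)

lemma walk_path_Cons:
  "walk_path (Suc N) (x # ys) i =
     (if i = 0 \<or> Suc N < i then 0 else x * (1 + walk_path N ys (i - 1)))"
  by (cases i) (auto simp: walk_path_def walk_0_Cons_Suc)

lemma walk_path_negate_head:
  assumes "xs \<in> sign_seqs N"
  shows "walk_path N (negate_head xs) = (\<lambda>i. - walk_path N xs i)"
proof (cases xs)
  case Nil
  with assms show ?thesis
    by (auto simp: sign_seqs_def walk_path_def)
next
  case (Cons y ys)
  with assms obtain M where "N = Suc M"
    by (cases N) (auto simp: sign_seqs_def)
  with Cons show ?thesis
    by (auto simp: walk_path_Cons)
qed

lemma count_paths_cong:
  "(\<And>xs. xs \<in> sign_seqs N \<Longrightarrow> Q (walk_path N xs) = Q' (walk_path N xs)) \<Longrightarrow>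
    count_paths N Q = count_paths N Q'"
  unfolding count_paths_def by (rule arg_cong[where f = card]) auto

lemma count_paths_0: "count_paths 0 Q = (if Q (\<lambda>_. 0) then 1 else 0)"
proof -
  have "walk_path 0 [] = (\<lambda>_. 0)"
    by (auto simp: walk_path_def)
  then have "{xs \<in> sign_seqs 0. Q (walk_path 0 xs)} = (if Q (\<lambda>_. 0) then {[]} else {})"
    by (auto simp: sign_seqs_0)
  then show ?thesis
    by (simp add: count_paths_def)
qed

lemma negate_head_negate_head [simp]: "negate_head (negate_head xs) = xs"
  by (cases xs) simp_all

lemma negate_head_sign_seqs: "xs \<in> sign_seqs N \<Longrightarrow> negate_head xs \<in> sign_seqs N"
  by (cases xs) (auto simp: sign_seqs_def)

lemma count_paths_neg: "count_paths N (\<lambda>w. Q (\<lambda>i. - w i)) = count_paths N Q"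
proof -
  have "bij_betw negate_head
      {xs \<in> sign_seqs N. Q (\<lambda>i. - walk_path N xs i)} {xs \<in> sign_seqs N. Q (walk_path N xs)}"
    by (rule bij_betw_byWitness[where f' = negate_head])
      (auto simp: negate_head_sign_seqs walk_path_negate_head)
  then show ?thesis
    unfolding count_paths_def by (rule bij_betw_same_card)
qed

lemma count_paths_Suc:
  "count_paths (Suc N) Q =
     count_paths N (\<lambda>w. Q (prepend_step N 1 w)) + count_paths N (\<lambda>w. Q (prepend_step N (-1) w))"
proof -
  let ?S = "\<lambda>x. {ys \<in> sign_seqs N. Q (walk_path (Suc N) (x # ys))}"
  have "{xs \<in> sign_seqs (Suc N). Q (walk_path (Suc N) xs)} = Cons 1 ` ?S 1 \<union> Cons (-1) ` ?S (-1)"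
    by (auto simp: sign_seqs_Suc)
  then have "count_paths (Suc N) Q = card (Cons 1 ` ?S 1) + card (Cons (-1) ` ?S (-1))"
    unfolding count_paths_def by (simp only:) (rule card_Un_disjoint; auto)
  then have split: "count_paths (Suc N) Q = card (?S 1) + card (?S (-1))"
    by (simp add: card_image)
  have "walk_path (Suc N) (1 # ys) = prepend_step N 1 (walk_path N ys)" for ys
    by (auto simp: walk_path_Cons prepend_step_def)
  then have up: "card (?S 1) = count_paths N (\<lambda>w. Q (prepend_step N 1 w))"
    by (simp add: count_paths_def)
  have "walk_path (Suc N) ((-1) # ys) = prepend_step N (-1) (\<lambda>i. - walk_path N ys i)" for ys
    by (auto simp: walk_path_Cons prepend_step_def)
  then have "card (?S (-1)) = count_paths N (\<lambda>w. Q (prepend_step N (-1) (\<lambda>i. - w i)))"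
    by (simp add: count_paths_def)
  also have "\<dots> = count_paths N (\<lambda>w. Q (prepend_step N (-1) w))"
    by (rule count_paths_neg)
  finally show ?thesis
    using split up by simp
qed

definition paths_ending_above :: "nat \<Rightarrow> int \<Rightarrow> nat" where
  "paths_ending_above N t = count_paths N (\<lambda>w. t \<le> w N)"

definition positive_paths_ending_above :: "nat \<Rightarrow> int \<Rightarrow> int \<Rightarrow> nat" where
  "positive_paths_ending_above N x T = count_paths N (\<lambda>w. (\<forall>i\<le>N. 0 < x + w i) \<and> T \<le> x + w N)"

lemma paths_ending_above_Suc:
  "paths_ending_above (Suc N) t = paths_ending_above N (t - 1) + paths_ending_above N (t + 1)"
proof -
  have "(\<lambda>w. t \<le> prepend_step N 1 w (Suc N)) = (\<lambda>w. t - 1 \<le> w N)"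
    and "(\<lambda>w. t \<le> prepend_step N (-1) w (Suc N)) = (\<lambda>w. t + 1 \<le> w N)"
    by auto
  then show ?thesis
    unfolding paths_ending_above_def count_paths_Suc[of N] by simp
qed

lemma positive_paths_ending_above_start_0: "positive_paths_ending_above N 0 T = 0"
proof -
  have "positive_paths_ending_above N 0 T = count_paths N (\<lambda>_. False)"
    unfolding positive_paths_ending_above_def by (rule count_paths_cong) auto
  then show ?thesis
    by (simp add: count_paths_def)
qed

lemma positive_paths_ending_above_Suc:
  assumes "0 < x"
  shows "positive_paths_ending_above (Suc N) x T =
           positive_paths_ending_above N (x + 1) T + positive_paths_ending_above N (x - 1) T"
proof -
  have all_le_Suc: "(\<forall>i\<le>Suc N. P i) \<longleftrightarrow> P 0 \<and> (\<forall>i\<le>N. P (Suc i))" for P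
    using All_less_Suc2[of "Suc N" P] by (simp add: less_Suc_eq_le)
  have "(\<lambda>w. (\<forall>i\<le>Suc N. 0 < x + prepend_step N s w i) \<and> T \<le> x + prepend_step N s w (Suc N)) =
        (\<lambda>w. (\<forall>i\<le>N. 0 < (x + s) + w i) \<and> T \<le> (x + s) + w N)" for s
    using assms by (auto simp: all_le_Suc algebra_simps)
  from this[of 1] this[of "-1"] show ?thesis
    unfolding positive_paths_ending_above_def count_paths_Suc[of N] by simp
qed

text \<open>The reflection principle. Both sides obey the same recursion in \<open>N\<close> and \<open>x\<close> and both
  vanish at \<open>x = 0\<close>.\<close>

lemma positive_paths_ending_above_reflection:
  assumes "1 \<le> x" "1 \<le> T"
  shows "int (positive_paths_ending_above N x T) =
           int (paths_ending_above N (T - x)) - int (paths_ending_above N (T + x))"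
  using assms(1)
proof (induction N arbitrary: x)
  case 0
  with assms(2) show ?case
    by (simp add: positive_paths_ending_above_def paths_ending_above_def count_paths_0)
next
  case (Suc N)
  have IH_up: "int (positive_paths_ending_above N (x + 1) T) =
      int (paths_ending_above N (T - (x + 1))) - int (paths_ending_above N (T + (x + 1)))"
    using Suc by simp
  have IH_down: "int (positive_paths_ending_above N (x - 1) T) =
      int (paths_ending_above N (T - (x - 1))) - int (paths_ending_above N (T + (x - 1)))"
  proof (cases "x = 1")
    case True
    then show ?thesis
      by (simp add: positive_paths_ending_above_start_0)
  next
    case False
    with Suc show ?thesis
      by simp
  qed
  have "paths_ending_above (Suc N) (T - x) =
      paths_ending_above N (T - (x + 1)) + paths_ending_above N (T - (x - 1))"
    and "paths_ending_above (Suc N) (T + x) =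
      paths_ending_above N (T + (x - 1)) + paths_ending_above N (T + (x + 1))"
    using paths_ending_above_Suc[of N "T - x"] paths_ending_above_Suc[of N "T + x"]
    by (simp_all add: algebra_simps)
  with Suc.prems IH_up IH_down show ?case
    by (simp add: positive_paths_ending_above_Suc)
qed

lemma positive_paths_ending_above_eq_window:
  assumes "1 \<le> x" "1 \<le> T"
  shows "positive_paths_ending_above N x T = count_paths N (\<lambda>w. T - x \<le> w N \<and> w N < T + x)"
proof -
  let ?S = "\<lambda>P. {xs \<in> sign_seqs N. P (walk_path N xs N)}"
  have "?S (\<lambda>v. T - x \<le> v) = ?S (\<lambda>v. T + x \<le> v) \<union> ?S (\<lambda>v. T - x \<le> v \<and> v < T + x)"
    using assms by auto
  then have "paths_ending_above N (T - x) =
      paths_ending_above N (T + x) + count_paths N (\<lambda>w. T - x \<le> w N \<and> w N < T + x)"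
    unfolding paths_ending_above_def count_paths_def by (simp only:) (rule card_Un_disjoint; auto)
  with positive_paths_ending_above_reflection[OF assms, of N] show ?thesis
    by simp
qed

lemma binomial_le_count_paths_ending_at:
  "N choose j \<le> count_paths N (\<lambda>w. w N = 2 * int j - int N)"
proof (induction N arbitrary: j)
  case 0
  then show ?case
    by (simp add: count_paths_0)
next
  case (Suc N)
  have "(\<lambda>w. prepend_step N 1 w (Suc N) = 2 * int j - int (Suc N)) =
          (\<lambda>w. w N = 2 * int j - int N - 2)"
    and "(\<lambda>w. prepend_step N (-1) w (Suc N) = 2 * int j - int (Suc N)) =
          (\<lambda>w. w N = 2 * int j - int N)"
    by auto
  then have step: "count_paths (Suc N) (\<lambda>w. w (Suc N) = 2 * int j - int (Suc N)) =
      count_paths N (\<lambda>w. w N = 2 * int j - int N - 2) + count_paths N (\<lambda>w. w N = 2 * int j - int N)"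
    unfolding count_paths_Suc[of N] by simp
  show ?case
  proof (cases j)
    case 0
    with step Suc.IH[of 0] show ?thesis
      by simp
  next
    case (Suc i)
    then have "2 * int j - int N - 2 = 2 * int i - int N"
      by simp
    from step[unfolded this] Suc.IH[of i] Suc.IH[of j] show ?thesis
      unfolding \<open>j = Suc i\<close> binomial_Suc_Suc by linarith
  qed
qed

lemma sum_count_paths_ending_at_le:
  assumes "finite I" "inj_on g I" "\<And>i. i \<in> I \<Longrightarrow> P (g i)"
  shows "(\<Sum>i\<in>I. count_paths N (\<lambda>w. w N = g i)) \<le> count_paths N (\<lambda>w. P (w N))"
proof -
  have "(\<Sum>i\<in>I. count_paths N (\<lambda>w. w N = g i)) =
      card (\<Union>i\<in>I. {xs \<in> sign_seqs N. walk_path N xs N = g i})"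
    unfolding count_paths_def
    by (rule card_UN_disjoint[symmetric]) (use assms in \<open>auto dest: inj_onD\<close>)
  also have "\<dots> \<le> count_paths N (\<lambda>w. P (w N))"
    unfolding count_paths_def by (rule card_mono) (use assms in auto)
  finally show ?thesis .
qed

lemma central_binomial_Suc: "2 * Suc n choose Suc n = 2 * (2 * n + 1 choose n)"
  using central_binomial_odd[of "2 * n + 1"] by simp

lemma Suc_times_odd_central_binomial: "Suc n * (2 * n + 1 choose n) = (2 * n + 1) * (2 * n choose n)"
  using Suc_times_binomial[of n "2 * n"] central_binomial_odd[of "2 * n + 1"] by simp

lemma central_binomial_sq_lower_bound:
  assumes "1 \<le> n"
  shows "16 ^ n \<le> 4 * real n * real (2 * n choose n) ^ 2"
  using assms
proof (induction n rule: nat_induct_at_least)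
  case base
  then show ?case
    by simp
next
  case (Suc n)
  define C where "C = real (2 * n choose n)"
  define Y where "Y = real (2 * n + 1 choose n)"
  have "real (Suc n) * Y = real (2 * n + 1) * C"
    unfolding C_def Y_def by (metis of_nat_mult Suc_times_odd_central_binomial)
  then have Y: "(real n + 1) * Y = (2 * real n + 1) * C"
    by (simp add: add.commute)
  have "(real n + 1) * 16 ^ Suc n = 16 * (real n + 1) * 16 ^ n"
    by simp
  also have "\<dots> \<le> 16 * (real n + 1) * (4 * real n * C ^ 2)"
    using Suc.IH unfolding C_def by (intro mult_left_mono) auto
  also have "\<dots> = 16 * (4 * real n * (real n + 1)) * C ^ 2"
    by (simp add: algebra_simps)
  also have "\<dots> \<le> 16 * (2 * real n + 1) ^ 2 * C ^ 2"
    by (intro mult_right_mono mult_left_mono) (auto simp: power2_eq_square algebra_simps)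
  also have "\<dots> = 16 * ((2 * real n + 1) * C) ^ 2"
    by (simp add: power_mult_distrib)
  also have "\<dots> = (real n + 1) * (4 * (real n + 1) * (2 * Y) ^ 2)"
    unfolding Y[symmetric] by (simp add: power2_eq_square)
  finally have "16 ^ Suc n \<le> 4 * (real n + 1) * (2 * Y) ^ 2"
    by (rule mult_left_le_imp_le) simp
  then show ?case
    unfolding Y_def central_binomial_Suc by (simp add: algebra_simps)
qed

lemma central_binomial_lower_bound_sqrt:
  assumes "1 \<le> N"
  shows "2 ^ N / (2 * sqrt N) \<le> real (N choose (N div 2))"
proof -
  have "4 ^ N \<le> 4 * real N * real (N choose (N div 2)) ^ 2"
  proof (cases "even N")
    case True
    then obtain n where N: "N = 2 * n"
      by blast
    with assms have "1 \<le> n"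
      by simp
    with N have "(4::real) ^ N \<le> 4 * real n * real (N choose (N div 2)) ^ 2"
      using central_binomial_sq_lower_bound[of n] by (simp add: power_mult)
    also have "\<dots> \<le> 4 * real N * real (N choose (N div 2)) ^ 2"
      unfolding N by (intro mult_right_mono) auto
    finally show ?thesis .
  next
    case False
    then obtain n where N: "N = 2 * n + 1"
      using oddE by blast
    have "(16::real) ^ Suc n \<le> 4 * real (Suc n) * real (2 * Suc n choose Suc n) ^ 2"
      by (rule central_binomial_sq_lower_bound) simp
    then have "4 * 16 ^ n \<le> 4 * real (Suc n) * real (N choose (N div 2)) ^ 2"
      unfolding central_binomial_Suc N by (simp add: power2_eq_square ac_simps)
    also have "\<dots> \<le> 4 * real N * real (N choose (N div 2)) ^ 2"
      unfolding N by (intro mult_right_mono) auto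
    finally show ?thesis
      unfolding N by (simp add: power_mult)
  qed
  moreover have "(4::real) ^ N = (2 ^ N) ^ 2"
    by (simp add: power2_eq_square flip: power_mult_distrib)
  then have "(2 ^ N / (2 * sqrt N)) ^ 2 = 4 ^ N / (4 * real N)"
    by (simp add: power_divide power_mult_distrib)
  ultimately have "(2 ^ N / (2 * sqrt N)) ^ 2 \<le> real (N choose (N div 2)) ^ 2"
    using assms by (simp add: divide_simps mult.commute)
  then show ?thesis
    by (rule power2_le_imp_le) simp
qed

lemma binomial_ratio_power_lower_bound:
  assumes "2 * h \<le> N" "t \<le> h"
  shows "((real h - real t) / (real h + real t)) ^ t * real (N choose h) \<le> real (N choose (h + t))"
  using assms(2)
proof (induction t)
  case 0
  then show ?case
    by simp
next
  case (Suc t)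
  define r where "r = (real h - real t) / (real h + real t)"
  define r' where "r' = (real h - real (Suc t)) / (real h + real (Suc t))"
  have "t < h"
    using Suc by simp
  have "0 \<le> r'"
    unfolding r'_def using \<open>t < h\<close> by (intro divide_nonneg_pos) auto
  have "r' \<le> r"
    unfolding r_def r'_def using \<open>t < h\<close> by (auto simp: divide_simps algebra_simps)
  have r'_le_ratio: "r' \<le> real (N - (h + t)) / real (Suc (h + t))"
    unfolding r'_def using assms(1) \<open>t < h\<close>
    by (intro frac_le) (auto simp: of_nat_diff)
  have "Suc (h + t) * (N choose Suc (h + t)) = (N - (h + t)) * (N choose (h + t))"
    using binomial_absorption[of "h + t" N] binomial_absorb_comp[of N "h + t"] by simp
  then have step: "real (N choose Suc (h + t)) = real (N - (h + t)) / real (Suc (h + t)) * real (N choose (h + t))"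
    by (simp add: field_simps flip: of_nat_mult)
  have "r' ^ Suc t * real (N choose h) = r' * (r' ^ t * real (N choose h))"
    by simp
  also have "\<dots> \<le> r' * (r ^ t * real (N choose h))"
    using \<open>0 \<le> r'\<close> \<open>r' \<le> r\<close> by (intro mult_left_mono mult_right_mono power_mono) auto
  also have "\<dots> \<le> r' * real (N choose (h + t))"
    using Suc \<open>0 \<le> r'\<close> unfolding r_def by (intro mult_left_mono) auto
  also have "\<dots> \<le> real (N choose Suc (h + t))"
    unfolding step using r'_le_ratio by (intro mult_right_mono) auto
  finally show ?case
    unfolding r'_def by simp
qed

lemma exp_neg_le_ratio_power:
  fixes a b :: real
  assumes "0 < a" "0 \<le> b"
  shows "exp (- (real t * b / a)) \<le> (a / (a + b)) ^ t"
proof -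
  have "(a + b) / a \<le> exp (b / a)"
    using exp_ge_add_one_self[of "b / a"] assms by (simp add: add_divide_distrib)
  then have "((a + b) / a) ^ t \<le> exp (b / a) ^ t"
    using assms by (intro power_mono) auto
  also have "\<dots> = exp (real t * b / a)"
    by (simp flip: exp_of_nat_mult)
  finally have "1 / exp (real t * b / a) \<le> 1 / ((a + b) / a) ^ t"
    using assms by (intro divide_left_mono) auto
  then show ?thesis
    by (simp add: exp_minus power_divide field_simps)
qed

lemma binomial_near_centre_lower_bound:
  assumes "2 \<le> N" "(t + 1) ^ 2 \<le> N"
  shows "exp (-4) * 2 ^ N / (2 * sqrt N) \<le> real (N choose (N div 2 + t))"
proof -
  define h where "h = N div 2"
  have "t * t + 2 * t \<le> 2 * h"
    using assms(2) unfolding h_def power2_eq_square by simp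
  then have "real (t * t + 2 * t) \<le> real (2 * h)"
    by (rule of_nat_mono)
  moreover have "t + 1 \<le> h"
  proof (cases "t \<le> 1")
    case True
    with assms(1) \<open>t * t + 2 * t \<le> 2 * h\<close> show ?thesis
      unfolding h_def by (auto simp: le_Suc_eq)
  next
    case False
    then have "2 * 2 \<le> t * t"
      using mult_le_mono[of 2 t 2 t] by simp
    with \<open>t * t + 2 * t \<le> 2 * h\<close> show ?thesis
      by linarith
  qed
  ultimately have "real t * (2 * real t) / (real h - real t) \<le> 4"
    by (simp add: divide_simps)
  then have "exp (-4) \<le> exp (- (real t * (2 * real t) / (real h - real t)))"
    by simp
  also have "\<dots> \<le> ((real h - real t) / (real h - real t + 2 * real t)) ^ t"
    using \<open>t + 1 \<le> h\<close> by (intro exp_neg_le_ratio_power) auto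
  also have "real h - real t + 2 * real t = real h + real t"
    by simp
  finally have "exp (-4) \<le> ((real h - real t) / (real h + real t)) ^ t" .
  moreover have "2 ^ N / (2 * sqrt N) \<le> real (N choose h)"
    unfolding h_def using assms(1) by (intro central_binomial_lower_bound_sqrt) simp
  ultimately have "exp (-4) * (2 ^ N / (2 * sqrt N)) \<le> ((real h - real t) / (real h + real t)) ^ t * real (N choose h)"
    by (intro mult_mono) (auto intro: order_trans[OF exp_ge_zero])
  also have "\<dots> \<le> real (N choose (h + t))"
    using \<open>t + 1 \<le> h\<close> unfolding h_def by (intro binomial_ratio_power_lower_bound) auto
  finally show ?thesis
    unfolding h_def by simp
qed

lemma count_paths_ending_in_window_lower_bound:
  fixes z :: nat
  assumes "1 \<le> z" "4 * z ^ 2 \<le> N"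
  shows "real z * (exp (-4) * 2 ^ N / (2 * sqrt N)) \<le>
           real (count_paths N (\<lambda>w. int z \<le> w N \<and> w N < 3 * int z))"
proof -
  define c where "c = (N + z + 1) div 2"
  define g where "g i = 2 * int (c + i) - int N" for i
  have "1 \<le> z ^ 2"
    using assms(1) by simp
  with assms(2) have "2 \<le> N"
    by linarith
  have binomial: "exp (-4) * 2 ^ N / (2 * sqrt N) \<le> real (N choose (c + i))"
    and endpoint: "int z \<le> g i \<and> g i < 3 * int z" if "i < z" for i
  proof -
    define t where "t = c + i - N div 2"
    have "c + i = N div 2 + t" "2 * t \<le> 3 * z"
      using that unfolding t_def c_def by auto
    then have "t + 1 \<le> 2 * z"
      using assms(1) by presburger
    then have "(t + 1) ^ 2 \<le> N"
      using assms(2) power_mono[of "t + 1" "2 * z" 2] by (simp add: power_mult_distrib)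
    with \<open>2 \<le> N\<close> \<open>c + i = N div 2 + t\<close>
    show "exp (-4) * 2 ^ N / (2 * sqrt N) \<le> real (N choose (c + i))"
      by (simp add: binomial_near_centre_lower_bound)
    show "int z \<le> g i \<and> g i < 3 * int z"
      using that unfolding g_def c_def by auto
  qed
  have "real z * (exp (-4) * 2 ^ N / (2 * sqrt N)) \<le> (\<Sum>i<z. real (N choose (c + i)))"
    using sum_mono[of "{..<z}", OF binomial] by simp
  also have "\<dots> \<le> (\<Sum>i<z. real (count_paths N (\<lambda>w. w N = g i)))"
    unfolding g_def by (intro sum_mono of_nat_mono binomial_le_count_paths_ending_at)
  also have "\<dots> \<le> real (count_paths N (\<lambda>w. int z \<le> w N \<and> w N < 3 * int z))"
    unfolding of_nat_sum[symmetric] of_nat_le_iff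
    by (rule sum_count_paths_ending_at_le) (use endpoint in \<open>auto simp: inj_on_def g_def\<close>)
  finally show ?thesis .
qed

lemma le_lfun_imp_four_sq_le:
  assumes "int k \<le> lfun m n"
  shows "4 * k ^ 2 \<le> n - m + 1"
proof -
  have "int k \<le> \<lfloor>sqrt (n - m + 1) / 2\<rfloor>"
    using assms by (simp add: lfun_def)
  then have "2 * real k \<le> sqrt (n - m + 1)"
    by linarith
  then have "(2 * real k) ^ 2 \<le> sqrt (n - m + 1) ^ 2"
    by (intro power_mono) auto
  then have "real (4 * k ^ 2) \<le> real (n - m + 1)"
    by (simp add: power_mult_distrib)
  then show ?thesis
    by (simp only: of_nat_le_iff)
qed

lemma positive_paths_ending_above_le_card_Lev_Uev:
  "positive_paths_ending_above (n - m + 1) z (2 * z) \<le>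
     card (sign_seqs (n - m + 1) \<inter> (Lev m n z \<inter> Uev m n z))"
proof -
  define N where "N = n - m + 1"
  have "xs \<in> Lev m n z \<inter> Uev m n z"
    if "\<forall>i\<le>N. 0 < z + walk_path N xs i" "2 * z \<le> z + walk_path N xs N" for xs
  proof -
    have "walk z xs N \<le> (MAX i\<in>{1..N}. walk z xs i)"
      unfolding N_def by (intro Max_ge) auto
    with that show ?thesis
      unfolding Lev_def Uev_def N_def[symmetric]
      by (auto simp: walk_eq_start_plus_walk_0[of z] walk_path_def)
  qed
  then show ?thesis
    unfolding positive_paths_ending_above_def count_paths_def N_def[symmetric]
    by (intro card_mono) auto
qed

lemma Pz_Lev_Uev_lower_bound:
  assumes "1 \<le> k" "4 * k ^ 2 \<le> n - m + 1"
  shows "exp (-4) / 2 * real k / sqrt (n - m + 1) \<le> Pz (n - m + 1) (Lev m n k \<inter> Uev m n k)"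
proof -
  define N where "N = n - m + 1"
  have "exp (-4) / 2 * real k / sqrt N = real k * (exp (-4) * 2 ^ N / (2 * sqrt N)) / 2 ^ N"
    by (simp add: field_simps)
  also have "\<dots> \<le> count_paths N (\<lambda>w. int k \<le> w N \<and> w N < 3 * int k) / 2 ^ N"
    using assms unfolding N_def[symmetric]
    by (intro divide_right_mono count_paths_ending_in_window_lower_bound) auto
  also have "\<dots> = positive_paths_ending_above N k (2 * k) / 2 ^ N"
    using positive_paths_ending_above_eq_window[of k "2 * k" N] assms(1) by simp
  also have "\<dots> \<le> card (sign_seqs N \<inter> (Lev m n k \<inter> Uev m n k)) / 2 ^ N"
    using positive_paths_ending_above_le_card_Lev_Uev[of n m k] unfolding N_def[symmetric]
    by (intro divide_right_mono of_nat_mono) auto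
  also have "\<dots> = Pz N (Lev m n k \<inter> Uev m n k)"
    by (simp add: Pz_eq_card)
  finally show ?thesis
    unfolding N_def .
qed

theorem lemma20:
  shows "\<exists>c::real > 0. \<forall>(m::nat) (n::nat) (z::int).
           1 \<le> m \<and> m \<le> n \<and> 0 \<le> z \<and> z \<le> lfun m n \<longrightarrow>
           Pz (n - m + 1) (Lev m n z \<inter> Uev m n z) \<ge> c * real_of_int z / sqrt (real (n - m + 1))"
proof (intro exI[of _ "exp (-4) / 2"] conjI allI impI)
  fix m n :: nat and z :: int
  assume "1 \<le> m \<and> m \<le> n \<and> 0 \<le> z \<and> z \<le> lfun m n"
  \<comment> \<open>Only \<open>z \<le> \<surd>(n - m + 1) / 2\<close> is needed.\<close>
  then obtain k where z: "z = int k" and "int k \<le> lfun m n"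
    using nonneg_int_cases by blast
  show "exp (-4) / 2 * real_of_int z / sqrt (real (n - m + 1)) \<le> Pz (n - m + 1) (Lev m n z \<inter> Uev m n z)"
  proof (cases "k = 0")
    case True
    then show ?thesis
      by (simp add: z Pz_def)
  next
    case False
    with le_lfun_imp_four_sq_le[OF \<open>int k \<le> lfun m n\<close>] show ?thesis
      unfolding z using Pz_Lev_Uev_lower_bound[of k n m] by simp
  qed
qed simp

end
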